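(* For $n>2$ and $1<k<n$, in $G=H_B(n,k)$: (1) the periphery $P(G)=\{v: e(v)=\mathrm{diam}(G)\}$ equals the set of all $r$-vertices of $V_2$ with $1\le r<n$; (2) the centre $C(G)=\{v: e(v)=\mathrm{rad}(G)\}$ equals the set of all $n$-vertices (which all lie in $V_2$).
   Context: Fix integers $n\ge 2$ and $1\le k<n$ and positive real numbers $x_1<x_2<\dots<x_n$. Let $\mathscr{B}_n=\{\pm x_1,\pm x_2,\dots,\pm x_{n-1},x_n\}$ (so $-x_n\notin\mathscr{B}_n$). Let $\phi(\mathscr{B}_n)$ be the family of all nonempty subsets $S\subseteq\mathscr{B}_n$ whose elements have pairwise distinct absolute values and whose element of largest absolute value is positive. Let $\mathscr{B}_n^+=\{x_1,\dots,x_n\}$, let $V_1$ be the set of all $k$-element subsets of $\mathscr{B}_n^+$, and let $V_2=\phi(\mathscr{B}_n)\setminus V_1$. For $A\in\phi(\mathscr{B}_n)$ put $A^\dagger=\{|a|:a\in A\}$. The bipartite Kneser B type-$k$ graph $H_B(n,k)$ is the simple graph with vertex set $V_1\cup V_2$ in which $X\in V_1$ and $Y\in V_2$ are adjacent if and only if $X\subseteq Y^\dagger$ or $Y^\dagger\subseteq X$, and there are no other edges. An $r$-vertex is a vertex having exactly $r$ elements. $e(v)$ denotes eccentricity. *)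

theory Defs
  imports Main "HOL-Library.Extended_Nat"
begin

text \<open>A simple graph is given by a vertex set V and a set E of (ordered) adjacent pairs,
  assumed symmetric. Distances take values in enat (infinite if unreachable).\<close>

definition gdist :: "('a \<times> 'a) set \<Rightarrow> 'a \<Rightarrow> 'a \<Rightarrow> enat" where
  "gdist E u v = Inf {enat m | m. (u, v) \<in> E ^^ m}"

definition ecc :: "'a set \<Rightarrow> ('a \<times> 'a) set \<Rightarrow> 'a \<Rightarrow> enat" where
  "ecc V E v = (SUP u\<in>V. gdist E v u)"

definition diam :: "'a set \<Rightarrow> ('a \<times> 'a) set \<Rightarrow> enat" where
  "diam V E = (SUP v\<in>V. ecc V E v)"

definition rad :: "'a set \<Rightarrow> ('a \<times> 'a) set \<Rightarrow> enat" where
  "rad V E = (INF v\<in>V. ecc V E v)"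

definition periphery :: "'a set \<Rightarrow> ('a \<times> 'a) set \<Rightarrow> 'a set" where
  "periphery V E = {v \<in> V. ecc V E v = diam V E}"

definition centre :: "'a set \<Rightarrow> ('a \<times> 'a) set \<Rightarrow> 'a set" where
  "centre V E = {v \<in> V. ecc V E v = rad V E}"

text \<open>x :: nat \<Rightarrow> real gives x_1 < ... < x_n (indices 1..n).\<close>

definition Bn :: "(nat \<Rightarrow> real) \<Rightarrow> nat \<Rightarrow> real set" where
  "Bn x n = {x i | i. 1 \<le> i \<and> i < n} \<union> {- x i | i. 1 \<le> i \<and> i < n} \<union> {x n}"

definition Bn_plus :: "(nat \<Rightarrow> real) \<Rightarrow> nat \<Rightarrow> real set" where
  "Bn_plus x n = {x i | i. 1 \<le> i \<and> i \<le> n}"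

definition phi :: "real set \<Rightarrow> real set set" where
  "phi B = {S. S \<noteq> {} \<and> S \<subseteq> B \<and> inj_on abs S \<and>
              (\<forall>a\<in>S. (\<forall>b\<in>S. \<bar>b\<bar> \<le> \<bar>a\<bar>) \<longrightarrow> a > 0)}"

definition HB_V1 :: "(nat \<Rightarrow> real) \<Rightarrow> nat \<Rightarrow> nat \<Rightarrow> real set set" where
  "HB_V1 x n k = {S. S \<subseteq> Bn_plus x n \<and> card S = k}"

definition HB_V2 :: "(nat \<Rightarrow> real) \<Rightarrow> nat \<Rightarrow> nat \<Rightarrow> real set set" where
  "HB_V2 x n k = phi (Bn x n) - HB_V1 x n k"

definition HB_V :: "(nat \<Rightarrow> real) \<Rightarrow> nat \<Rightarrow> nat \<Rightarrow> real set set" where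
  "HB_V x n k = HB_V1 x n k \<union> HB_V2 x n k"

definition HB_adj1 :: "real set \<Rightarrow> real set \<Rightarrow> bool" where
  "HB_adj1 X Y \<longleftrightarrow> X \<subseteq> abs ` Y \<or> abs ` Y \<subseteq> X"

definition HB_E :: "(nat \<Rightarrow> real) \<Rightarrow> nat \<Rightarrow> nat \<Rightarrow> (real set \<times> real set) set" where
  "HB_E x n k = {(X, Y) | X Y. X \<in> HB_V1 x n k \<and> Y \<in> HB_V2 x n k \<and> HB_adj1 X Y}
              \<union> {(Y, X) | X Y. X \<in> HB_V1 x n k \<and> Y \<in> HB_V2 x n k \<and> HB_adj1 X Y}"

end

theory Submission imports Defs begin

text \<open>\<open>H_B(n,k)\<close> is bipartite with sides \<open>V\<^sub>1\<close> and \<open>V\<^sub>2\<close>. The vertex \<open>B\<^sub>n\<^sup>+\<close> (indeed every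
  \<open>n\<close>-vertex) is adjacent to all of \<open>V\<^sub>1\<close>, and every vertex of \<open>V\<^sub>2\<close> has a neighbour in \<open>V\<^sub>1\<close>;
  walks through such a hub bound the eccentricity by 2 at \<open>n\<close>-vertices, by 3 on \<open>V\<^sub>1\<close> and by 4
  on \<open>V\<^sub>2\<close>. Conversely, negating the least element of a \<open>k\<close>-subset \<open>B\<close> of \<open>B\<^sub>n\<^sup>+\<close> gives a
  vertex of \<open>V\<^sub>2\<close> whose only neighbour is \<open>B\<close>. Taking \<open>B\<close> incomparable with a given vertex,
  the parity of walks in a bipartite graph shows that all three bounds are attained, so the
  diameter is 4, the radius is 2, and the claims follow.\<close>

section \<open>Distances and eccentricities\<close>

lemma gdist_le_relpow: "(u, v) \<in> E ^^ m \<Longrightarrow> gdist E u v \<le> enat m"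
  unfolding gdist_def by (rule Inf_lower) blast

lemma enat_le_gdist: "(\<And>m. m < d \<Longrightarrow> (u, v) \<notin> E ^^ m) \<Longrightarrow> enat d \<le> gdist E u v"
  unfolding gdist_def by (rule Inf_greatest) (auto simp: not_less[symmetric])

lemma relpow_if_gdist_eq: assumes "gdist E u v = enat m" shows "(u, v) \<in> E ^^ m"
proof -
  let ?S = "{enat m | m. (u, v) \<in> E ^^ m}"
  have "?S \<noteq> {}"
  proof
    assume "?S = {}"
    then have "gdist E u v = \<infinity>" unfolding gdist_def by (simp add: top_enat_def)
    with assms show False by simp
  qed
  then have "Inf ?S \<in> ?S" unfolding Inf_enat_def by (auto intro: LeastI)
  then obtain m' where "Inf ?S = enat m'" "(u, v) \<in> E ^^ m'" by blast
  then show ?thesis using assms by (simp add: gdist_def)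
qed

lemma gdist_edge_le: "(u, v) \<in> E \<Longrightarrow> gdist E u v \<le> 1"
  using gdist_le_relpow[where m=1] by (simp add: one_enat_def)

lemma gdist_le_eSuc: assumes "(u, w) \<in> E" shows "gdist E u v \<le> eSuc (gdist E w v)"
proof (cases "gdist E w v")
  case (enat m)
  then have "(w, v) \<in> E ^^ m" by (rule relpow_if_gdist_eq)
  then have "(u, v) \<in> E ^^ Suc m" by (rule relpow_Suc_I2[OF assms])
  then show ?thesis using enat by (simp add: eSuc_enat gdist_le_relpow)
qed simp

lemma gdist_le_ecc: "v \<in> V \<Longrightarrow> gdist E u v \<le> ecc V E u"
  unfolding ecc_def by (rule SUP_upper)

lemma ecc_le: "(\<And>v. v \<in> V \<Longrightarrow> gdist E u v \<le> d) \<Longrightarrow> ecc V E u \<le> d"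
  unfolding ecc_def by (rule SUP_least)

section \<open>Bipartite graphs with a hub\<close>

definition bipartition :: "'a set \<Rightarrow> 'a set \<Rightarrow> ('a \<times> 'a) set \<Rightarrow> bool" where
  "bipartition A B E \<longleftrightarrow> A \<inter> B = {} \<and> E \<subseteq> A \<times> B \<union> B \<times> A"

lemma bipartition_swap: "bipartition A B E \<Longrightarrow> bipartition B A E"
  by (auto simp: bipartition_def)

lemma relpow_bipartition_parity:
  assumes "bipartition A B E" "(u, v) \<in> E ^^ m" "u \<in> A"
  shows "v \<in> (if even m then A else B)"
  using assms(2)
proof (induction m arbitrary: v)
  case 0
  then show ?case using assms(3) by simp
next
  case (Suc m)
  then obtain w where "(u, w) \<in> E ^^ m" "(w, v) \<in> E" by auto
  with Suc.IH have "w \<in> (if even m then A else B)" "(w, v) \<in> E" by auto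
  then show ?case using assms(1) unfolding bipartition_def by (cases "even m") auto
qed

lemma bipartition_gdist_ge_2:
  assumes "bipartition A B E" "u \<in> A" "v \<in> A" "u \<noteq> v"
  shows "2 \<le> gdist E u v"
proof -
  have "(u, v) \<notin> E ^^ m" if "m < 2" for m
  proof
    assume walk: "(u, v) \<in> E ^^ m"
    consider "m = 0" | "m = 1" using \<open>m < 2\<close> by linarith
    then show False
    proof cases
      case 1 then show False using walk assms(4) by simp
    next
      case 2 then show False
        using relpow_bipartition_parity[OF assms(1) walk assms(2)] assms(1,3)
        by (auto simp: bipartition_def)
    qed
  qed
  from enat_le_gdist[OF this] show ?thesis by (simp add: numeral_eq_enat)
qed

lemma bipartition_gdist_ge_3:
  assumes "bipartition A B E" "u \<in> A" "v \<in> B" "(u, v) \<notin> E"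
  shows "3 \<le> gdist E u v"
proof -
  have "(u, v) \<notin> E ^^ m" if "m < 3" for m
  proof
    assume walk: "(u, v) \<in> E ^^ m"
    have "even m \<or> m = 1" using \<open>m < 3\<close> by presburger
    then show False
    proof
      assume "even m" then show False
        using relpow_bipartition_parity[OF assms(1) walk assms(2)] assms(1,3)
        by (auto simp: bipartition_def)
    next
      assume "m = 1" then show False using walk assms(4) by simp
    qed
  qed
  from enat_le_gdist[OF this] show ?thesis by (simp add: numeral_eq_enat)
qed

lemma bipartition_gdist_ge_4:
  assumes "bipartition A B E" "u \<in> A" "v \<in> A" "u \<noteq> v"
    and "\<And>w. (u, w) \<in> E \<Longrightarrow> (w, v) \<notin> E"
  shows "4 \<le> gdist E u v"
proof -
  have "(u, v) \<notin> E ^^ m" if "m < 4" for m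
  proof
    assume walk: "(u, v) \<in> E ^^ m"
    have "odd m \<or> m = 0 \<or> m = 2" using \<open>m < 4\<close> by presburger
    then show False
    proof (elim disjE)
      assume "odd m" then show False
        using relpow_bipartition_parity[OF assms(1) walk assms(2)] assms(1,3)
        by (auto simp: bipartition_def)
    next
      assume "m = 0" then show False using walk assms(4) by simp
    next
      assume "m = 2" then show False using walk assms(5) by (auto simp: numeral_2_eq_2)
    qed
  qed
  from enat_le_gdist[OF this] show ?thesis by (simp add: numeral_eq_enat)
qed

locale hub_graph =
  fixes A B :: "'a set" and E :: "('a \<times> 'a) set" and h :: 'a
  assumes sym: "sym E"
    and hub: "\<And>a. a \<in> A \<Longrightarrow> (h, a) \<in> E"
    and cover: "\<And>b. b \<in> B \<Longrightarrow> \<exists>a\<in>A. (a, b) \<in> E"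
begin

lemma gdist_hub_le_2: "v \<in> A \<union> B \<Longrightarrow> gdist E h v \<le> 2"
proof (elim UnE)
  assume "v \<in> A"
  then have "gdist E h v \<le> 1" by (intro gdist_edge_le hub)
  then show ?thesis using one_le_numeral order_trans by blast
next
  assume "v \<in> B"
  then obtain a where "a \<in> A" "(a, v) \<in> E" using cover by blast
  have "gdist E h v \<le> eSuc (gdist E a v)" using \<open>a \<in> A\<close> by (intro gdist_le_eSuc hub)
  also have "\<dots> \<le> eSuc 1" using \<open>(a, v) \<in> E\<close> by (simp add: gdist_edge_le)
  finally show ?thesis by (simp add: eSuc_plus_1 one_add_one)
qed

lemma gdist_le_3: assumes "a \<in> A" "v \<in> A \<union> B" shows "gdist E a v \<le> 3"
proof -
  have "(a, h) \<in> E" using hub[OF assms(1)] sym by (simp add: sym_def)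
  then have "gdist E a v \<le> eSuc (gdist E h v)" by (rule gdist_le_eSuc)
  also have "\<dots> \<le> eSuc 2" using gdist_hub_le_2[OF assms(2)] eSuc_ile_mono by blast
  finally show ?thesis by simp
qed

lemma gdist_le_4: assumes "b \<in> B" "v \<in> A \<union> B" shows "gdist E b v \<le> 4"
proof -
  obtain a where "a \<in> A" "(b, a) \<in> E" using cover[OF assms(1)] sym by (auto simp: sym_def)
  then have "gdist E b v \<le> eSuc (gdist E a v)" by (intro gdist_le_eSuc)
  also have "\<dots> \<le> eSuc 3" using gdist_le_3[OF \<open>a \<in> A\<close> assms(2)] eSuc_ile_mono by blast
  finally show ?thesis by simp
qed

end

section \<open>The graph \<open>H_B(n,k)\<close>\<close>

lemma exists_incomparable_subset_card:
  assumes "finite U" "A \<subseteq> U" "A \<noteq> {}" "card A < card U" "0 < k" "k < card U"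
  obtains B where "B \<subseteq> U" "card B = k" "\<not> B \<subseteq> A" "\<not> A \<subseteq> B"
proof (cases "k \<le> card A")
  case True
  have "A \<noteq> U" using assms(4) by auto
  then obtain j where j: "j \<in> U" "j \<notin> A" using assms(2) by blast
  obtain C where C: "C \<subseteq> A" "card C = k - 1"
    using True obtain_subset_with_card_n[of "k - 1" A] by force
  have "finite A" using assms(1,2) finite_subset by blast
  then have "finite C" using C(1) finite_subset by blast
  have card_jC: "card (insert j C) = k" using C j \<open>finite C\<close> assms(5) by (auto simp: card_insert_if)
  have "\<not> A \<subseteq> insert j C"
  proof
    assume "A \<subseteq> insert j C"
    then have "A = insert j C" using card_seteq[of "insert j C" A] \<open>finite C\<close> card_jC True by simp
    then show False using j by blast
  qed
  then show ?thesis using that[of "insert j C"] j C assms(2) card_jC by blast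
next
  case False
  obtain a where a: "a \<in> A" using assms(3) by blast
  have "k \<le> card (U - {a})" using a assms(1,2,6) by (auto simp: subsetD)
  then obtain B where B: "B \<subseteq> U - {a}" "card B = k" using obtain_subset_with_card_n by metis
  have "\<not> B \<subseteq> A" using False B(2) card_mono[of A B] assms(1,2) finite_subset by blast
  then show ?thesis using that[of B] a B by blast
qed

locale kneser_B =
  fixes x :: "nat \<Rightarrow> real" and n k :: nat
  assumes n_gt_2: "n > 2" and k_gt_1: "1 < k" and k_lt_n: "k < n"
    and x_pos: "\<And>i. 1 \<le> i \<Longrightarrow> i \<le> n \<Longrightarrow> x i > 0"
    and x_mono: "strict_mono_on {1..n} x"
begin

abbreviation "Bplus \<equiv> Bn_plus x n"
abbreviation "V1 \<equiv> HB_V1 x n k"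
abbreviation "V2 \<equiv> HB_V2 x n k"
abbreviation "V \<equiv> HB_V x n k"
abbreviation "E \<equiv> HB_E x n k"

lemma Bplus_eq_image: "Bplus = x ` {1..n}"
  by (auto simp: Bn_plus_def)

lemma finite_Bplus: "finite Bplus"
  by (simp add: Bplus_eq_image)

lemma card_Bplus: "card Bplus = n"
  using strict_mono_on_imp_inj_on[OF x_mono] by (simp add: Bplus_eq_image card_image)

lemma Bplus_pos: "a \<in> Bplus \<Longrightarrow> a > 0"
  using x_pos by (auto simp: Bn_plus_def)

lemma Bplus_subset_Bn: "Bplus \<subseteq> Bn x n"
  by (auto simp: Bn_plus_def Bn_def le_less)

lemma abs_in_Bplus: assumes "a \<in> Bn x n" shows "\<bar>a\<bar> \<in> Bplus"
proof -
  have "\<exists>i. 1 \<le> i \<and> i \<le> n \<and> (a = x i \<or> a = - x i)"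
    using assms unfolding Bn_def
  proof (elim UnE)
    assume "a \<in> {x n}"
    then show ?thesis using n_gt_2 by (intro exI[of _ n]) auto
  qed (auto intro: less_imp_le)
  then obtain i where i: "1 \<le> i" "i \<le> n" "a = x i \<or> a = - x i" by blast
  then have "\<bar>a\<bar> = x i" using x_pos[OF i(1,2)] by auto
  then show ?thesis using i(1,2) by (auto simp: Bn_plus_def)
qed

lemma finite_Bn: "finite (Bn x n)"
  by (simp add: Bn_def)

lemma phi_props:
  assumes "Y \<in> phi (Bn x n)"
  shows "finite Y" "Y \<noteq> {}" "abs ` Y \<subseteq> Bplus" "card (abs ` Y) = card Y"
  using assms finite_Bn finite_subset abs_in_Bplus unfolding phi_def by (auto simp: card_image)

lemma V1_props:
  assumes "X \<in> V1" shows "finite X" "X \<subseteq> Bplus" "card X = k"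
  using assms finite_Bplus finite_subset unfolding HB_V1_def by auto

lemma V2_props:
  assumes "Y \<in> V2"
  shows "finite Y" "abs ` Y \<subseteq> Bplus" "card (abs ` Y) = card Y" "1 \<le> card Y" "card Y \<le> n"
proof -
  have Y: "Y \<in> phi (Bn x n)" using assms by (simp add: HB_V2_def)
  show "finite Y" "abs ` Y \<subseteq> Bplus" "card (abs ` Y) = card Y" using phi_props[OF Y] by auto
  show "1 \<le> card Y" using phi_props[OF Y] by (simp add: Suc_le_eq card_gt_0_iff)
  show "card Y \<le> n"
    using phi_props[OF Y] card_mono[OF finite_Bplus] card_Bplus by metis
qed

lemma V_eq: "V = V1 \<union> V2"
  by (simp add: HB_V_def)

lemma bipartition_V1_V2: "bipartition V1 V2 E"
  by (auto simp: bipartition_def HB_V2_def HB_E_def)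

lemma sym_E: "sym E"
  by (auto simp: sym_def HB_E_def)

lemma edge_iff: "X \<in> V1 \<Longrightarrow> Y \<in> V2 \<Longrightarrow> (X, Y) \<in> E \<longleftrightarrow> HB_adj1 X Y"
  using bipartition_V1_V2 by (auto simp: HB_E_def bipartition_def)

lemma V2_has_neighbour: assumes "Y \<in> V2" shows "\<exists>X\<in>V1. (X, Y) \<in> E"
proof -
  have "\<exists>X\<in>V1. X \<subseteq> abs ` Y \<or> abs ` Y \<subseteq> X"
  proof (cases "k \<le> card (abs ` Y)")
    case True
    then obtain X where "X \<subseteq> abs ` Y" "card X = k" using obtain_subset_with_card_n by metis
    then show ?thesis using V2_props[OF assms] unfolding HB_V1_def by blast
  next
    case False
    then obtain X where "abs ` Y \<subseteq> X" "X \<subseteq> Bplus" "card X = k"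
      using exists_subset_between[of "abs ` Y" k Bplus] V2_props[OF assms] card_Bplus k_lt_n
        finite_Bplus by auto
    then show ?thesis unfolding HB_V1_def by blast
  qed
  then show ?thesis using edge_iff[OF _ assms] by (auto simp: HB_adj1_def)
qed

lemma full_vertex_adjacent:
  assumes "Y \<in> V2" "card Y = n" "X \<in> V1" shows "(X, Y) \<in> E"
proof -
  have "abs ` Y = Bplus"
    using card_subset_eq[OF finite_Bplus] V2_props[OF assms(1)] assms(2) card_Bplus by simp
  then show ?thesis using edge_iff[OF assms(3,1)] V1_props[OF assms(3)] by (simp add: HB_adj1_def)
qed

lemma hub_graph_full_vertex: "Y \<in> V2 \<Longrightarrow> card Y = n \<Longrightarrow> hub_graph V1 V2 E Y"
  using sym_E V2_has_neighbour full_vertex_adjacent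
  by unfold_locales (auto simp: sym_def)

lemma Bplus_in_V2: "Bplus \<in> V2"
proof -
  have "Bplus \<noteq> {}" using card_Bplus n_gt_2 by auto
  moreover have "inj_on abs Bplus" using Bplus_pos by (intro inj_onI) (metis abs_of_pos)
  ultimately have "Bplus \<in> phi (Bn x n)"
    using Bplus_subset_Bn Bplus_pos unfolding phi_def by auto
  moreover have "Bplus \<notin> V1" using card_Bplus k_lt_n by (simp add: HB_V1_def)
  ultimately show ?thesis by (simp add: HB_V2_def)
qed

lemma neighbour_of_card_k:
  assumes "Y \<in> V2" "card Y = k" "(X, Y) \<in> E" shows "X = abs ` Y"
proof -
  have X: "X \<in> V1" using assms(1,3) bipartition_V1_V2 by (auto simp: bipartition_def)
  then have "X \<subseteq> abs ` Y \<or> abs ` Y \<subseteq> X" using edge_iff assms by (simp add: HB_adj1_def)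
  moreover have "finite X" "finite (abs ` Y)" using V1_props[OF X] V2_props[OF assms(1)] by auto
  ultimately show ?thesis
    using card_subset_eq V1_props(3)[OF X] V2_props(3)[OF assms(1)] assms(2) by metis
qed

lemma pendant_vertex:
  assumes B: "B \<subseteq> Bplus" "card B = k"
  obtains Y where "Y \<in> V2" "abs ` Y = B" "card Y = k"
proof -
  have "finite B" using B(1) finite_Bplus finite_subset by blast
  define m where "m = Min B"
  have "B \<noteq> {}" using B(2) k_gt_1 by auto
  then have m: "m \<in> B" using \<open>finite B\<close> m_def by simp
  have "card (B - {m}) \<noteq> 0" using m B(2) k_gt_1 \<open>finite B\<close> by simp
  then have "B - {m} \<noteq> {}" by force
  then obtain b where "b \<in> B" "b \<noteq> m" by blast
  then have b: "b \<in> B" "m < b" using \<open>finite B\<close> m_def by (simp_all add: order_le_neq_trans)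
  have m_pos: "m > 0" using Bplus_pos m B(1) by blast
  have abs_B: "\<And>a. a \<in> B \<Longrightarrow> \<bar>a\<bar> = a" using Bplus_pos B(1) by force
  obtain i where i: "1 \<le> i" "i \<le> n" "m = x i" using m B(1) by (auto simp: Bn_plus_def)
  obtain j where j: "1 \<le> j" "j \<le> n" "b = x j" using b B(1) by (auto simp: Bn_plus_def)
  \<comment> \<open>\<open>-x\<^sub>n \<notin> B\<^sub>n\<close>; the larger \<open>b\<close>, available since \<open>k \<ge> 2\<close>, excludes \<open>m = x\<^sub>n\<close>\<close>
  have "i \<noteq> n" using b(2) i j strict_mono_on_leD[OF x_mono, of j n] by auto
  then have neg_m: "- m \<in> Bn x n" using i unfolding Bn_def by auto
  define Y where "Y = insert (- m) (B - {m})"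
  have abs_B_m: "abs ` (B - {m}) = B - {m}" using abs_B by force
  then have "abs ` Y = B" using m m_pos unfolding Y_def by (simp add: insert_absorb)
  moreover have "inj_on abs Y"
  proof -
    have "inj_on abs (B - {m})" using abs_B by (intro inj_onI) (metis DiffD1)
    moreover have "- m \<notin> B - {m}" using Bplus_pos B(1) m_pos by force
    ultimately show ?thesis using abs_B_m m_pos unfolding Y_def by simp
  qed
  moreover have "a > 0" if "a \<in> Y" "\<forall>c\<in>Y. \<bar>c\<bar> \<le> \<bar>a\<bar>" for a
  proof (cases "a = - m")
    case True
    have "b \<in> Y" using b unfolding Y_def by simp
    then show ?thesis using that True b(2) m_pos by force
  next
    case False
    then show ?thesis using that Bplus_pos B(1) unfolding Y_def by auto
  qed
  moreover have "Y \<subseteq> Bn x n" using neg_m Bplus_subset_Bn B(1) unfolding Y_def by blast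
  ultimately have "Y \<in> phi (Bn x n)" unfolding phi_def Y_def by auto
  moreover have "Y \<notin> V1" using Bplus_pos m_pos unfolding HB_V1_def Y_def by force
  ultimately have "Y \<in> V2" by (simp add: HB_V2_def)
  moreover have "card Y = k" using V2_props(3)[OF \<open>Y \<in> V2\<close>] \<open>abs ` Y = B\<close> B(2) by simp
  ultimately show ?thesis using that \<open>abs ` Y = B\<close> by blast
qed

lemma V2_card_k_vertex:
  obtains Y where "Y \<in> V2" "card Y = k"
proof -
  obtain B where "B \<subseteq> Bplus" "card B = k"
    by (rule obtain_subset_with_card_n[of k Bplus]) (use card_Bplus k_lt_n in auto)
  then obtain Y where "Y \<in> V2" "card Y = k" by (metis pendant_vertex)
  then show ?thesis by (rule that)
qed

lemma pendant_vertex_incomparable: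
  assumes "A \<subseteq> Bplus" "A \<noteq> {}" "card A < n"
  obtains Y where "Y \<in> V2" "card Y = k" "\<not> abs ` Y \<subseteq> A" "\<not> A \<subseteq> abs ` Y"
proof -
  obtain B where B: "B \<subseteq> Bplus" "card B = k" and "\<not> B \<subseteq> A" "\<not> A \<subseteq> B"
    by (rule exists_incomparable_subset_card[OF finite_Bplus assms(1,2), where k = k])
      (use assms(3) card_Bplus k_gt_1 k_lt_n in auto)
  moreover obtain Y where "Y \<in> V2" "abs ` Y = B" "card Y = k" using pendant_vertex[OF B] .
  ultimately show ?thesis using that by blast
qed

lemma hub_graph_Bplus: "hub_graph V1 V2 E Bplus"
  using hub_graph_full_vertex[OF Bplus_in_V2 card_Bplus] .

lemma ecc_V1: assumes X: "X \<in> V1" shows "ecc V E X = 3"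
proof (rule antisym)
  show "ecc V E X \<le> 3"
    using hub_graph.gdist_le_3[OF hub_graph_Bplus X] by (intro ecc_le) (simp add: V_eq)
next
  have "X \<noteq> {}" "card X < n" using V1_props[OF X] k_gt_1 k_lt_n by auto
  then obtain Y where Y: "Y \<in> V2" "card Y = k" "\<not> X \<subseteq> abs ` Y"
    using pendant_vertex_incomparable[OF V1_props(2)[OF X]] by metis
  then have "(X, Y) \<notin> E" using neighbour_of_card_k by blast
  then have "3 \<le> gdist E X Y" using bipartition_gdist_ge_3[OF bipartition_V1_V2 X Y(1)] by blast
  also have "\<dots> \<le> ecc V E X" using Y(1) by (intro gdist_le_ecc) (simp add: V_eq)
  finally show "3 \<le> ecc V E X" .
qed

lemma ecc_full_vertex: assumes Y: "Y \<in> V2" "card Y = n" shows "ecc V E Y = 2"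
proof (rule antisym)
  show "ecc V E Y \<le> 2"
    using hub_graph.gdist_hub_le_2[OF hub_graph_full_vertex[OF Y]] by (intro ecc_le) (simp add: V_eq)
next
  obtain Y' where Y': "Y' \<in> V2" "card Y' = k" by (rule V2_card_k_vertex)
  then have "Y \<noteq> Y'" using Y(2) k_lt_n by auto
  then have "2 \<le> gdist E Y Y'"
    using bipartition_gdist_ge_2[OF bipartition_swap[OF bipartition_V1_V2] Y(1) Y'(1)] by blast
  also have "\<dots> \<le> ecc V E Y" using Y'(1) by (intro gdist_le_ecc) (simp add: V_eq)
  finally show "2 \<le> ecc V E Y" .
qed

lemma ecc_partial_vertex: assumes Y: "Y \<in> V2" "card Y < n" shows "ecc V E Y = 4"
proof (rule antisym)
  show "ecc V E Y \<le> 4"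
    using hub_graph.gdist_le_4[OF hub_graph_Bplus Y(1)] by (intro ecc_le) (simp add: V_eq)
next
  have "abs ` Y \<noteq> {}" "card (abs ` Y) < n" using V2_props[OF Y(1)] Y(2) by auto
  then obtain Y' where Y': "Y' \<in> V2" "card Y' = k"
      "\<not> abs ` Y' \<subseteq> abs ` Y" "\<not> abs ` Y \<subseteq> abs ` Y'"
    using pendant_vertex_incomparable[OF V2_props(2)[OF Y(1)]] by metis
  have "(w, Y') \<notin> E" if "(Y, w) \<in> E" for w
  proof
    assume "(w, Y') \<in> E"
    then have "w = abs ` Y'" using neighbour_of_card_k Y'(1,2) by blast
    moreover have "w \<in> V1" "(w, Y) \<in> E"
      using that Y(1) bipartition_V1_V2 sym_E by (auto simp: bipartition_def sym_def)
    ultimately show False using edge_iff[OF _ Y(1)] Y'(3,4) by (auto simp: HB_adj1_def)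
  qed
  moreover have "Y \<noteq> Y'" using Y'(3) by blast
  ultimately have "4 \<le> gdist E Y Y'"
    using bipartition_gdist_ge_4[OF bipartition_swap[OF bipartition_V1_V2] Y(1) Y'(1)] by blast
  also have "\<dots> \<le> ecc V E Y" using Y'(1) by (intro gdist_le_ecc) (simp add: V_eq)
  finally show "4 \<le> ecc V E Y" .
qed

lemma ecc_eq:
  assumes "v \<in> V" shows "ecc V E v = (if v \<in> V1 then 3 else if card v = n then 2 else 4)"
proof -
  consider "v \<in> V1" | "v \<in> V2" "card v = n" | "v \<in> V2" "v \<notin> V1" "card v < n"
    using assms V2_props(5)[of v] by (auto simp: V_eq order_less_le)
  then show ?thesis
  proof cases
    case 1 then show ?thesis by (simp add: ecc_V1)
  next
    case 2 then show ?thesis using V1_props(3) k_lt_n by (auto simp: ecc_full_vertex)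
  next
    case 3 then show ?thesis by (simp add: ecc_partial_vertex)
  qed
qed

lemma diam_eq_4: "diam V E = 4"
  unfolding diam_def
proof (rule antisym)
  show "(SUP v\<in>V. ecc V E v) \<le> 4" by (rule SUP_least) (simp add: ecc_eq)
  obtain Y where "Y \<in> V2" "card Y = k" by (rule V2_card_k_vertex)
  then have "Y \<in> V" "ecc V E Y = 4" using ecc_partial_vertex k_lt_n by (auto simp: V_eq)
  then show "4 \<le> (SUP v\<in>V. ecc V E v)" by (metis SUP_upper)
qed

lemma rad_eq_2: "rad V E = 2"
  unfolding rad_def
proof (rule antisym)
  have "Bplus \<in> V" "ecc V E Bplus = 2"
    using Bplus_in_V2 ecc_full_vertex card_Bplus by (auto simp: V_eq)
  then show "(INF v\<in>V. ecc V E v) \<le> 2" by (metis INF_lower)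
  show "2 \<le> (INF v\<in>V. ecc V E v)" by (rule INF_greatest) (simp add: ecc_eq)
qed

lemma full_vertices_in_V2: "{v \<in> V. card v = n} \<subseteq> V2"
  using V1_props(3) k_lt_n by (auto simp: V_eq)

lemma periphery_eq: "periphery V E = {v \<in> V2. 1 \<le> card v \<and> card v < n}"
proof (intro set_eqI iffI)
  fix v assume "v \<in> periphery V E"
  then have "v \<in> V" "ecc V E v = 4" by (auto simp: periphery_def diam_eq_4)
  then show "v \<in> {v \<in> V2. 1 \<le> card v \<and> card v < n}"
    using ecc_eq[of v] V2_props(4,5)[of v] by (auto simp: V_eq split: if_splits)
next
  fix v assume "v \<in> {v \<in> V2. 1 \<le> card v \<and> card v < n}"
  then have "v \<in> V" "ecc V E v = 4" using ecc_partial_vertex by (auto simp: V_eq)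
  then show "v \<in> periphery V E" by (simp add: periphery_def diam_eq_4)
qed

lemma centre_eq: "centre V E = {v \<in> V. card v = n}"
proof (intro set_eqI iffI)
  fix v assume "v \<in> centre V E"
  then have "v \<in> V" "ecc V E v = 2" by (auto simp: centre_def rad_eq_2)
  then show "v \<in> {v \<in> V. card v = n}" using ecc_eq[of v] by (simp split: if_splits)
next
  fix v assume "v \<in> {v \<in> V. card v = n}"
  then show "v \<in> centre V E"
    using full_vertices_in_V2 ecc_full_vertex by (auto simp: centre_def rad_eq_2)
qed

end

theorem mainTheorem14:
  fixes x :: "nat \<Rightarrow> real" and n k :: nat
  assumes "n > 2" and "1 < k" and "k < n"
    and "\<And>i. 1 \<le> i \<Longrightarrow> i \<le> n \<Longrightarrow> x i > 0"
    and "strict_mono_on {1..n} x"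
  shows "(periphery (HB_V x n k) (HB_E x n k) =
           {v \<in> HB_V2 x n k. 1 \<le> card v \<and> card v < n}) \<and>
         (centre (HB_V x n k) (HB_E x n k) = {v \<in> HB_V x n k. card v = n}) \<and>
         {v \<in> HB_V x n k. card v = n} \<subseteq> HB_V2 x n k"
proof -
  interpret kneser_B x n k using assms by unfold_locales
  show ?thesis using periphery_eq centre_eq full_vertices_in_V2 by blast
qed

end
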